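(* Let $m\ge 2$ and let $T$ be any hierarchy of size $m$. Let $H^{(m)}(x)=\sum_{n\ge1}H^{(m)}_nx^n$, where $H^{(m)}_n$ is the number of isomorphism classes of hierarchies of size $n$ that do not contain a subhierarchy isomorphic to $T$, and let $\rho_m$ be the radius of convergence of $H^{(m)}(x)$. Then the limit of $H^{(m)}(x)$ as $x\to\rho_m$ from the left exists (and is finite) and equals $\sum_{n=1}^{\infty}H^{(m)}_n\rho_m^n$.
   Context: A hierarchy is a finite rooted unordered tree in which no vertex has exactly one child; its size is its number of leaves. For a vertex $v$ of a hierarchy, the subhierarchy at $v$ is the hierarchy induced by $v$ and all its descendants (with root $v$); a hierarchy contains $T$ as a subhierarchy if the subhierarchy at some vertex (possibly the root) is isomorphic to $T$ as a rooted tree. *)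

theory Defs
  imports "HOL-Analysis.Analysis" "HOL-Library.Multiset"
begin

text \<open>Finite rooted unordered trees, up to isomorphism: a node is given by the
multiset of its children. Equality of htree values is exactly rooted-tree
isomorphism.\<close>
datatype htree = Node "htree multiset"

primrec is_hier :: "htree \<Rightarrow> bool" where
  "is_hier (Node M) = (size M \<noteq> 1 \<and> (\<forall>b\<in>#image_mset is_hier M. b))"

text \<open>Number of leaves (the size of a hierarchy).\<close>
primrec leaves :: "htree \<Rightarrow> nat" where
  "leaves (Node M) = (if M = {#} then 1 else sum_mset (image_mset leaves M))"

primrec subtrees :: "htree \<Rightarrow> htree set" where
  "subtrees (Node M) = insert (Node M) (\<Union>(set_mset (image_mset subtrees M)))"

definition contains_sub :: "htree \<Rightarrow> htree \<Rightarrow> bool" where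
  "contains_sub t T \<longleftrightarrow> T \<in> subtrees t"

definition avoid_count :: "htree \<Rightarrow> nat \<Rightarrow> nat" where
  "avoid_count T n = card {t. is_hier t \<and> leaves t = n \<and> \<not> contains_sub t T}"

text \<open>Coefficients H_n (with H_0 = 0, the series starts at n = 1).\<close>
definition Hcoef :: "htree \<Rightarrow> nat \<Rightarrow> real" where
  "Hcoef T n = (if n = 0 then 0 else real (avoid_count T n))"

end

theory Submission
  imports Defs
begin

text \<open>
  All coefficients are nonnegative, so a bound on the partial sums that is uniform on
  \<open>[0, \<rho>)\<close> persists at \<open>\<rho>\<close>; the series then converges at \<open>\<rho>\<close> and, by the Weierstrass
  M-test, is continuous on \<open>[0, \<rho>]\<close>.  The bound: joining two distinct \<open>T\<close>-avoiding
  hierarchies under a new binary root gives a \<open>T\<close>-avoiding hierarchy unless the result is \<open>T\<close>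
  itself, so for \<open>0 \<le> x \<le> 1\<close> we get \<open>H(x)\<^sup>2 - H(x) \<le> 2 H(x) + 2\<close>, whence \<open>H(x) \<le> 4\<close>.
  This needs \<open>\<rho> \<le> 1\<close>, which holds because the stars avoid \<open>T\<close> in every size but one; and
  \<open>\<rho> \<ge> 1/16\<close> because decomposing at the root bounds the generating function \<open>u\<close> of all
  hierarchies by \<open>u \<le> x + 2 u\<^sup>2\<close>, which keeps \<open>u \<le> 1/8\<close> at \<open>x = 1/16\<close>.
\<close>

lemma leaves_ge_1: "1 \<le> leaves t"
proof (induction t)
  case (Node M)
  show ?case
  proof (cases "M = {#}")
    case False
    then obtain a M' where M: "M = add_mset a M'" by (metis multiset_cases)
    then have "1 \<le> leaves a" using Node by simp
    then show ?thesis using M by simp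
  qed simp
qed

lemma leaves_neq_0 [simp]: "leaves t \<noteq> 0"
  using leaves_ge_1[of t] by linarith

definition leaf :: htree where
  "leaf = Node {#}"

primrec children :: "htree \<Rightarrow> htree multiset" where
  "children (Node M) = M"

definition join2 :: "htree \<Rightarrow> htree \<Rightarrow> htree" where
  "join2 a b = Node {#a, b#}"

definition graft :: "htree \<Rightarrow> htree \<Rightarrow> htree" where
  "graft a r = Node (add_mset a (children r))"

lemma leaves_join2 [simp]: "leaves (join2 a b) = leaves a + leaves b"
  by (simp add: join2_def)

lemma leaves_graft: "r \<noteq> leaf \<Longrightarrow> leaves (graft a r) = leaves a + leaves r"
  by (cases r) (simp add: graft_def leaf_def)

definition hiers_upto :: "nat \<Rightarrow> htree set" where
  "hiers_upto N = {t. is_hier t \<and> leaves t \<le> N}"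

lemma hiers_upto_0 [simp]: "hiers_upto 0 = {}"
  by (simp add: hiers_upto_def)

text \<open>Split off one child of the root: the remaining children form a hierarchy on their own,
  except when only one of them is left.\<close>
lemma hiers_upto_Suc_subset:
  "hiers_upto (Suc N) \<subseteq>
     insert leaf (case_prod join2 ` (hiers_upto N \<times> hiers_upto N) \<union>
                  case_prod graft ` (hiers_upto N \<times> (hiers_upto N - {leaf})))"
    (is "_ \<subseteq> ?R")
proof
  fix t assume t: "t \<in> hiers_upto (Suc N)"
  obtain M where tM: "t = Node M" by (cases t)
  show "t \<in> ?R"
  proof (cases "M = {#}")
    case True
    then show ?thesis using tM by (simp add: leaf_def)
  next
    case False
    then obtain a M' where M: "M = add_mset a M'" by (metis multiset_cases)
    have hier: "size M \<noteq> 1" "\<forall>x\<in>#M. is_hier x" using t tM by (auto simp: hiers_upto_def)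
    then have "M' \<noteq> {#}" using M by auto
    then have "leaves t = leaves a + leaves (Node M')" using tM M by simp
    then have "leaves a \<le> N" "leaves (Node M') \<le> N"
      using t leaves_ge_1[of a] leaves_ge_1[of "Node M'"] by (auto simp: hiers_upto_def)
    then have a: "a \<in> hiers_upto N" using hier M by (simp add: hiers_upto_def)
    show ?thesis
    proof (cases "size M' = 1")
      case True
      then obtain b where "M' = {#b#}" by (metis size_1_singleton_mset)
      then have "t = join2 a b" "b \<in> hiers_upto N"
        using tM M hier \<open>leaves (Node M') \<le> N\<close> by (auto simp: join2_def hiers_upto_def)
      then show ?thesis using a by blast
    next
      case False
      then have "Node M' \<in> hiers_upto N - {leaf}"
        using \<open>leaves (Node M') \<le> N\<close> \<open>M' \<noteq> {#}\<close> hier M by (auto simp: hiers_upto_def leaf_def)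
      moreover have "t = graft a (Node M')" using tM M by (simp add: graft_def)
      ultimately show ?thesis using a by blast
    qed
  qed
qed

lemma finite_hiers_upto: "finite (hiers_upto N)"
  by (induction N) (auto intro: finite_subset[OF hiers_upto_Suc_subset])

lemma sum_cartesian_product_mult:
  fixes w :: "'a \<Rightarrow> real"
  shows "(\<Sum>(a, b)\<in>A \<times> B. w a * w b) = sum w A * sum w B"
  by (simp add: sum_product sum.cartesian_product)

lemma hiers_weight_Suc_le:
  fixes x :: real
  assumes "0 \<le> x"
  shows "(\<Sum>t\<in>hiers_upto (Suc N). x ^ leaves t) \<le> x + 2 * (\<Sum>t\<in>hiers_upto N. x ^ leaves t)\<^sup>2"
proof -
  let ?w = "\<lambda>t. x ^ leaves t"
  let ?A = "hiers_upto N \<times> hiers_upto N" and ?B = "hiers_upto N \<times> (hiers_upto N - {leaf})"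
  let ?J = "case_prod join2 ` ?A" and ?G = "case_prod graft ` ?B"
  have fin: "finite ?A" "finite ?B" using finite_hiers_upto by auto
  have w_nonneg: "0 \<le> ?w t" for t using assms by simp
  have "sum ?w (hiers_upto (Suc N)) \<le> sum ?w (insert leaf (?J \<union> ?G))"
    by (rule sum_mono2) (use hiers_upto_Suc_subset fin w_nonneg in auto)
  also have "\<dots> \<le> ?w leaf + sum ?w (?J \<union> ?G)"
    using fin w_nonneg by (simp add: sum.insert_if)
  also have "sum ?w (?J \<union> ?G) \<le> sum ?w ?J + sum ?w ?G"
    using sum.union_inter[of ?J ?G ?w] sum_nonneg[of "?J \<inter> ?G" ?w] fin w_nonneg by simp
  also have "sum ?w ?J \<le> (\<Sum>(a, b)\<in>?A. ?w a * ?w b)"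
    using sum_image_le[OF fin(1), of ?w "case_prod join2"] w_nonneg
    by (simp add: case_prod_beta power_add)
  also have "sum ?w ?G \<le> sum (?w \<circ> case_prod graft) ?B"
    using sum_image_le[OF fin(2), of ?w "case_prod graft"] w_nonneg by simp
  also have "\<dots> = (\<Sum>(a, r)\<in>?B. ?w a * ?w r)"
  proof (rule sum.cong)
    fix p assume "p \<in> ?B"
    then obtain a r where "p = (a, r)" "r \<noteq> leaf" by auto
    then show "(?w \<circ> case_prod graft) p = (\<lambda>(a, r). ?w a * ?w r) p"
      by (simp add: leaves_graft power_add)
  qed simp
  also have "\<dots> \<le> (\<Sum>(a, b)\<in>?A. ?w a * ?w b)"
    by (rule sum_mono2) (use fin w_nonneg in auto)
  finally show ?thesis
    by (simp add: sum_cartesian_product_mult leaf_def power2_eq_square)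
qed

lemma hiers_weight_le: "(\<Sum>t\<in>hiers_upto N. (1/16::real) ^ leaves t) \<le> 1/8"
proof (induction N)
  case (Suc N)
  have "(\<Sum>t\<in>hiers_upto N. (1/16::real) ^ leaves t)\<^sup>2 \<le> (1/8)\<^sup>2"
    using Suc by (intro power_mono) (auto intro: sum_nonneg)
  then show ?case using hiers_weight_Suc_le[of "1/16" N] by (simp add: power2_eq_square)
qed simp

definition avoiders_upto :: "htree \<Rightarrow> nat \<Rightarrow> htree set" where
  "avoiders_upto T N = {t \<in> hiers_upto N. \<not> contains_sub t T}"

lemma finite_avoiders_upto: "finite (avoiders_upto T N)"
  unfolding avoiders_upto_def using finite_hiers_upto by simp

lemma Hcoef_nonneg: "0 \<le> Hcoef T n"
  by (simp add: Hcoef_def)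

lemma sum_Hcoef_eq_avoiders_weight:
  "(\<Sum>n\<le>N. Hcoef T n * x ^ n) = (\<Sum>t\<in>avoiders_upto T N. x ^ leaves t)"
proof -
  have "(\<Sum>t\<in>avoiders_upto T N. x ^ leaves t) =
          (\<Sum>n\<le>N. \<Sum>t\<in>{t \<in> avoiders_upto T N. leaves t = n}. x ^ leaves t)"
    by (rule sum.group[symmetric, OF finite_avoiders_upto])
      (auto simp: avoiders_upto_def hiers_upto_def)
  also have "\<dots> = (\<Sum>n\<le>N. Hcoef T n * x ^ n)"
  proof (rule sum.cong)
    fix n assume "n \<in> {..N}"
    then have "{t \<in> avoiders_upto T N. leaves t = n} =
                 {t. is_hier t \<and> leaves t = n \<and> \<not> contains_sub t T}"
      by (auto simp: avoiders_upto_def hiers_upto_def)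
    then show "(\<Sum>t\<in>{t \<in> avoiders_upto T N. leaves t = n}. x ^ leaves t) = Hcoef T n * x ^ n"
      by (auto simp: Hcoef_def avoid_count_def)
  qed simp
  finally show ?thesis ..
qed

lemma sum_comp_le_fibre_card:
  fixes g :: "'b \<Rightarrow> real" and k :: real
  assumes "finite D" and "\<And>y. y \<in> f ` D \<Longrightarrow> card {p \<in> D. f p = y} \<le> k" and "\<And>y. 0 \<le> g y"
  shows "(\<Sum>p\<in>D. g (f p)) \<le> k * (\<Sum>y\<in>f ` D. g y)"
proof -
  have "(\<Sum>p\<in>D. g (f p)) = (\<Sum>y\<in>f ` D. \<Sum>p\<in>{p \<in> D. f p = y}. g (f p))"
    by (rule sum.image_gen[OF assms(1)])
  also have "\<dots> = (\<Sum>y\<in>f ` D. real (card {p \<in> D. f p = y}) * g y)"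
    by (rule sum.cong) auto
  also have "\<dots> \<le> (\<Sum>y\<in>f ` D. k * g y)"
    by (rule sum_mono) (use assms(2,3) in \<open>auto intro: mult_right_mono\<close>)
  finally show ?thesis by (simp add: sum_distrib_left)
qed

lemma join2_eq_join2_iff: "join2 c d = join2 a b \<longleftrightarrow> (c = a \<and> d = b) \<or> (c = b \<and> d = a)"
proof
  assume "join2 c d = join2 a b"
  then have "{#c, d#} = {#a, b#}" by (simp add: join2_def)
  then show "(c = a \<and> d = b) \<or> (c = b \<and> d = a)" by (auto simp: add_eq_conv_diff)
qed (metis join2_def add_mset_commute)

lemma card_join2_fibre_le_2: "card {p \<in> D. case_prod join2 p = join2 a b} \<le> 2"
proof -
  have "{p \<in> D. case_prod join2 p = join2 a b} \<subseteq> {(a, b), (b, a)}"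
    using join2_eq_join2_iff[of _ _ a b] by fastforce
  then have "card {p \<in> D. case_prod join2 p = join2 a b} \<le> card {(a, b), (b, a)}"
    by (rule card_mono[rotated]) simp
  also have "\<dots> \<le> 2" by (rule card_insert_le_m1) auto
  finally show ?thesis .
qed

lemma join2_mem_avoiders_upto:
  assumes "a \<in> avoiders_upto T N" "b \<in> avoiders_upto T N" "join2 a b \<noteq> T"
  shows "join2 a b \<in> avoiders_upto T (2 * N)"
  using assms by (auto simp: avoiders_upto_def hiers_upto_def contains_sub_def join2_def)

lemma sum_off_diagonal_products_ge:
  fixes w :: "'a \<Rightarrow> real"
  assumes "finite A" and "\<And>a. 0 \<le> w a" and "\<And>a. w a \<le> 1"
  shows "(sum w A)\<^sup>2 - sum w A \<le> (\<Sum>(a, b)\<in>A \<times> A - Id. w a * w b)"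
proof -
  have "A \<times> A \<inter> Id = (\<lambda>a. (a, a)) ` A" by auto
  then have "(\<Sum>(a, b)\<in>A \<times> A \<inter> Id. w a * w b) = (\<Sum>a\<in>A. w a * w a)"
    by (simp add: sum.reindex inj_on_def)
  also have "\<dots> \<le> sum w A"
    by (rule sum_mono) (use assms(2,3) in \<open>auto intro: mult_left_le\<close>)
  finally have "(\<Sum>(a, b)\<in>A \<times> A \<inter> Id. w a * w b) \<le> sum w A" .
  moreover have "(\<Sum>(a, b)\<in>A \<times> A. w a * w b) =
                   (\<Sum>(a, b)\<in>A \<times> A - Id. w a * w b) + (\<Sum>(a, b)\<in>A \<times> A \<inter> Id. w a * w b)"
    using assms(1) by (simp add: sum.Int_Diff[of "A \<times> A" _ Id] add.commute)
  ultimately show ?thesis by (simp add: sum_cartesian_product_mult power2_eq_square)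
qed

lemma avoiders_weight_square_le:
  fixes x :: real
  assumes "0 \<le> x" "x \<le> 1"
  shows "(\<Sum>t\<in>avoiders_upto T N. x ^ leaves t)\<^sup>2 - (\<Sum>t\<in>avoiders_upto T N. x ^ leaves t)
           \<le> 2 * (\<Sum>t\<in>avoiders_upto T (2 * N). x ^ leaves t) + 2"
proof -
  let ?w = "\<lambda>t. x ^ leaves t"
  let ?A = "avoiders_upto T N"
  let ?D = "?A \<times> ?A - Id"
  have w: "0 \<le> ?w t" "?w t \<le> 1" for t using assms by (auto simp: power_le_one)
  have fin: "finite ?D" using finite_avoiders_upto by simp
  have "(sum ?w ?A)\<^sup>2 - sum ?w ?A \<le> (\<Sum>(a, b)\<in>?D. ?w a * ?w b)"
    by (rule sum_off_diagonal_products_ge[OF finite_avoiders_upto]) (use w in auto)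
  also have "\<dots> = (\<Sum>p\<in>?D. ?w (case_prod join2 p))"
    by (simp add: case_prod_beta power_add)
  also have "\<dots> \<le> 2 * sum ?w (case_prod join2 ` ?D)"
  proof (rule sum_comp_le_fibre_card[OF fin _ w(1)])
    fix y assume "y \<in> case_prod join2 ` ?D"
    then obtain a b where y: "y = join2 a b" by auto
    have "card {p \<in> ?D. case_prod join2 p = y} \<le> 2"
      unfolding y by (rule card_join2_fibre_le_2)
    then show "real (card {p \<in> ?D. case_prod join2 p = y}) \<le> 2" by simp
  qed
  also have "sum ?w (case_prod join2 ` ?D) \<le> sum ?w (insert T (avoiders_upto T (2 * N)))"
    by (rule sum_mono2) (use finite_avoiders_upto join2_mem_avoiders_upto w in auto)
  also have "\<dots> \<le> 1 + sum ?w (avoiders_upto T (2 * N))"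
    using w[of T] by (simp add: sum.insert_if finite_avoiders_upto)
  finally show ?thesis by simp
qed

lemma suminf_Hcoef_power_le_4:
  fixes x :: real
  assumes "0 \<le> x" "x \<le> 1" and summable: "summable (\<lambda>n. Hcoef T n * x ^ n)"
  shows "(\<Sum>n. Hcoef T n * x ^ n) \<le> 4"
proof -
  define P where "P N = (\<Sum>n\<le>N. Hcoef T n * x ^ n)" for N
  define H where "H = (\<Sum>n. Hcoef T n * x ^ n)"
  have P_le_H: "P N \<le> H" for N
    unfolding P_def H_def using assms by (intro sum_le_suminf[OF summable]) (auto simp: Hcoef_nonneg)
  have P_square: "(P N)\<^sup>2 - P N \<le> 2 * P (2 * N) + 2" for N
    using avoiders_weight_square_le[OF assms(1,2)] unfolding P_def sum_Hcoef_eq_avoiders_weight .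
  have P_square_le: "(P N)\<^sup>2 \<le> 3 * H + 2" for N
    using P_square[of N] P_le_H[of N] P_le_H[of "2 * N"] by linarith
  have "P \<longlonglongrightarrow> H"
    unfolding P_def H_def by (rule summable_LIMSEQ'[OF summable])
  then have "(\<lambda>N. (P N)\<^sup>2) \<longlonglongrightarrow> H\<^sup>2"
    by (rule tendsto_power)
  then have "H\<^sup>2 \<le> 3 * H + 2"
    by (rule LIMSEQ_le_const2) (use P_square_le in blast)
  then have H_square: "H * H \<le> 3 * H + 2"
    by (simp add: power2_eq_square)
  show ?thesis
  proof (rule ccontr)
    assume "\<not> ?thesis"
    then have "4 < H" unfolding H_def by linarith
    then have "4 * H < H * H" by (intro mult_strict_right_mono) auto
    with H_square \<open>4 < H\<close> show False by linarith
  qed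
qed

definition star :: "nat \<Rightarrow> htree" where
  "star k = Node (replicate_mset k leaf)"

lemma star_props:
  assumes "2 \<le> k"
  shows is_hier_star: "is_hier (star k)"
    and leaves_star: "leaves (star k) = k"
    and subtrees_star: "subtrees (star k) = {star k, leaf}"
  using assms by (auto simp: star_def leaf_def)

lemma Hcoef_ge_1:
  assumes "T \<noteq> leaf" "2 \<le> n" "leaves T \<noteq> n"
  shows "1 \<le> Hcoef T n"
proof -
  let ?S = "{t. is_hier t \<and> leaves t = n \<and> \<not> contains_sub t T}"
  have "T \<noteq> star n" using assms(2,3) leaves_star[of n] by auto
  then have "star n \<in> ?S"
    using assms(1,2) is_hier_star leaves_star subtrees_star by (simp add: contains_sub_def)
  moreover have "finite ?S"
    by (rule finite_subset[OF _ finite_hiers_upto[of n]]) (auto simp: hiers_upto_def)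
  ultimately have "0 < card ?S" using card_gt_0_iff by blast
  then show ?thesis using assms(2) by (simp add: Hcoef_def avoid_count_def)
qed

lemma conv_radius_Hcoef_ge: "ereal (1/16) \<le> conv_radius (Hcoef T)"
proof -
  have "summable (\<lambda>n. Hcoef T n * (1/16::real) ^ n)"
  proof (rule summableI_nonneg_bounded)
    fix N
    have "(\<Sum>n<N. Hcoef T n * (1/16::real) ^ n) \<le> (\<Sum>n\<le>N. Hcoef T n * (1/16) ^ n)"
      by (intro sum_mono2) (auto simp: Hcoef_nonneg)
    also have "\<dots> \<le> (\<Sum>t\<in>hiers_upto N. (1/16) ^ leaves t)"
      unfolding sum_Hcoef_eq_avoiders_weight
      by (rule sum_mono2[OF finite_hiers_upto]) (auto simp: avoiders_upto_def)
    also have "\<dots> \<le> 1/8" by (rule hiers_weight_le)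
    finally show "(\<Sum>n<N. Hcoef T n * (1/16::real) ^ n) \<le> 1/8" .
  qed (simp add: Hcoef_nonneg)
  then show ?thesis using conv_radius_geI by fastforce
qed

lemma conv_radius_Hcoef_le:
  assumes "T \<noteq> leaf"
  shows "conv_radius (Hcoef T) \<le> 1"
proof -
  have "\<not> (\<lambda>n. Hcoef T n) \<longlonglongrightarrow> 0"
  proof
    assume "(\<lambda>n. Hcoef T n) \<longlonglongrightarrow> 0"
    then obtain N where "\<And>n. N \<le> n \<Longrightarrow> Hcoef T n < 1"
      by (metis eventually_sequentially order_tendstoD(2) zero_less_one)
    then have "Hcoef T (N + leaves T + 2) < 1" by simp
    moreover have "1 \<le> Hcoef T (N + leaves T + 2)" using assms by (intro Hcoef_ge_1) auto
    ultimately show False by simp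
  qed
  then have "\<not> summable (\<lambda>n. norm (Hcoef T n * (1::real) ^ n))"
    using summable_LIMSEQ_zero by (fastforce simp: Hcoef_nonneg)
  then show ?thesis using conv_radius_leI[of "Hcoef T" "1::real"] by (simp add: one_ereal_def)
qed

lemma nonneg_power_series_at_radius:
  fixes a :: "nat \<Rightarrow> real"
  assumes nonneg: "\<And>n. 0 \<le> a n" and "0 < \<rho>" and radius: "ereal \<rho> \<le> conv_radius a"
    and bounded: "\<And>x. 0 \<le> x \<Longrightarrow> x < \<rho> \<Longrightarrow> (\<Sum>n. a n * x ^ n) \<le> C"
  shows "summable (\<lambda>n. a n * \<rho> ^ n)"
    and "((\<lambda>x. \<Sum>n. a n * x ^ n) \<longlongrightarrow> (\<Sum>n. a n * \<rho> ^ n)) (at_left \<rho>)"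
proof -
  have partial_bounded: "(\<Sum>n<N. a n * \<rho> ^ n) \<le> C" for N
  proof (rule tendsto_upperbound)
    show "((\<lambda>x. \<Sum>n<N. a n * x ^ n) \<longlongrightarrow> (\<Sum>n<N. a n * \<rho> ^ n)) (at_left \<rho>)"
      by (intro tendsto_intros)
    have partial_le: "(\<Sum>n<N. a n * x ^ n) \<le> C" if "0 \<le> x" "x < \<rho>" for x
    proof -
      have "summable (\<lambda>n. a n * x ^ n)"
        using that radius by (intro summable_in_conv_radius) (auto intro: less_le_trans[of _ "ereal \<rho>"])
      then have "(\<Sum>n<N. a n * x ^ n) \<le> (\<Sum>n. a n * x ^ n)"
        using that nonneg by (intro sum_le_suminf) auto
      then show ?thesis using bounded[OF that] by linarith
    qed
    show "\<forall>\<^sub>F x in at_left \<rho>. (\<Sum>n<N. a n * x ^ n) \<le> C"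
      using eventually_at_left_real[OF \<open>0 < \<rho>\<close>] by eventually_elim (simp add: partial_le)
  qed simp
  show summable: "summable (\<lambda>n. a n * \<rho> ^ n)"
    using partial_bounded nonneg \<open>0 < \<rho>\<close> by (intro summableI_nonneg_bounded) auto
  have "uniform_limit {0..\<rho>} (\<lambda>N x. \<Sum>n<N. a n * x ^ n) (\<lambda>x. \<Sum>n. a n * x ^ n) sequentially"
  proof (rule Weierstrass_m_test[OF _ summable])
    fix n and x :: real
    assume "x \<in> {0..\<rho>}"
    then show "norm (a n * x ^ n) \<le> a n * \<rho> ^ n"
      using nonneg by (auto simp: abs_mult intro!: mult_left_mono power_mono)
  qed
  then have "continuous_on {0..\<rho>} (\<lambda>x. \<Sum>n. a n * x ^ n)"
    by (rule uniform_limit_theorem[rotated]) (auto intro!: always_eventually continuous_intros)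
  then show "((\<lambda>x. \<Sum>n. a n * x ^ n) \<longlongrightarrow> (\<Sum>n. a n * \<rho> ^ n)) (at_left \<rho>)"
    using \<open>0 < \<rho>\<close> by (rule continuous_on_Icc_at_leftD)
qed

theorem lemma3p4:
  fixes T :: htree and m :: nat
  assumes "m \<ge> 2" and "is_hier T" and "leaves T = m"
  shows "\<exists>\<rho>::real. conv_radius (Hcoef T) = ereal \<rho> \<and> 0 < \<rho> \<and>
           (\<exists>L::real. ((\<lambda>x. \<Sum>n. Hcoef T n * x ^ n) \<longlongrightarrow> L) (at_left \<rho>) \<and>
                       (\<lambda>n. Hcoef T n * \<rho> ^ n) sums L)"
proof -
  have "T \<noteq> leaf" using assms(1,3) by (auto simp: leaf_def)
  then obtain \<rho> where \<rho>: "conv_radius (Hcoef T) = ereal \<rho>" "1/16 \<le> \<rho>" "\<rho> \<le> 1"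
    using conv_radius_Hcoef_ge[of T] conv_radius_Hcoef_le[of T] by (cases "conv_radius (Hcoef T)") auto
  have "(\<Sum>n. Hcoef T n * x ^ n) \<le> 4" if "0 \<le> x" "x < \<rho>" for x
  proof (rule suminf_Hcoef_power_le_4)
    show "summable (\<lambda>n. Hcoef T n * x ^ n)"
      using that \<rho>(1) by (intro summable_in_conv_radius) simp
  qed (use that \<rho> in auto)
  note at_radius = nonneg_power_series_at_radius[OF Hcoef_nonneg _ _ this]
  have "0 < \<rho>" using \<rho>(2) by simp
  then show ?thesis
    using at_radius[OF \<open>0 < \<rho>\<close>] \<rho>(1) summable_sums by fastforce
qed

end
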